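(* Let $k$ be a positive integer. (1) If $k$ is even, each vertex of $\mathcal F_k$ has at most one predecessor. (2) If $k$ is odd, each vertex of $\mathcal F_k$ has at most two predecessors, and if a vertex $p/q$ has two predecessors $a_1/b_1$ and $a_2/b_2$, then $a_1/b_1$ and $a_2/b_2$ are adjacent in $\mathcal F_k$.
   Context: The vertex set $V$ consists of all reduced fractions $p/q$ with $p,q\in\mathbb Z$, $\gcd(p,q)=1$, together with $1/0$; here $p/q$ and $(-p)/(-q)$ denote the same vertex. For vertices define $d(p/q,a/b)=|pb-qa|$. The graph $\mathcal F_k$ has vertex set $V$, with an edge between $p/q$ and $a/b$ exactly when $d(p/q,a/b)=k$. Write $a/b\prec p/q$ when $a/b$ and $p/q$ are adjacent in $\mathcal F_k$ and $|a|\le|p|$ and $|b|\le|q|$; in that case $a/b$ is called a predecessor of $p/q$. *)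

theory Defs
  imports Main
begin

text \<open>A vertex p/q is represented by an integer pair (p,q) with gcd p q = 1
  (this includes 1/0 as (1,0) or (-1,0)); the pairs (p,q) and (-p,-q)
  represent the same vertex.\<close>

definition is_vertex :: "int \<times> int \<Rightarrow> bool" where
  "is_vertex v \<longleftrightarrow> coprime (fst v) (snd v)"

definition same_vertex :: "int \<times> int \<Rightarrow> int \<times> int \<Rightarrow> bool" where
  "same_vertex v w \<longleftrightarrow> w = v \<or> w = (- fst v, - snd v)"

definition fdist :: "int \<times> int \<Rightarrow> int \<times> int \<Rightarrow> int" where
  "fdist v w = \<bar>fst v * snd w - snd v * fst w\<bar>"

definition adjF :: "nat \<Rightarrow> int \<times> int \<Rightarrow> int \<times> int \<Rightarrow> bool" where
  "adjF k v w \<longleftrightarrow> is_vertex v \<and> is_vertex w \<and> fdist v w = int k"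

definition predF :: "nat \<Rightarrow> int \<times> int \<Rightarrow> int \<times> int \<Rightarrow> bool" where
  "predF k w v \<longleftrightarrow> adjF k w v \<and> \<bar>fst w\<bar> \<le> \<bar>fst v\<bar> \<and> \<bar>snd w\<bar> \<le> \<bar>snd v\<bar>"

end

theory Submission
  imports Defs
begin

text \<open>Fix \<open>v = (p, q)\<close> and orient each predecessor so that \<open>a q - b p = k\<close>. Two oriented
  predecessors have the same determinant against the primitive vector \<open>v\<close>, so they differ by
  an integer multiple \<open>t v\<close>; the bounds \<open>|a| \<le> |p|\<close>, \<open>|b| \<le> |q|\<close> force \<open>|t| \<le> 2\<close>, and \<open>|t| = 2\<close>
  would make the predecessor \<open>\<plusminus>v\<close> itself, of determinant 0. Hence distinct oriented
  predecessors differ by \<open>\<plusminus>v\<close>, so there are at most two of them (three would need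
  \<open>\<plusminus>1 = \<plusminus>1 \<plusminus> 1\<close>), and their determinant is \<open>\<plusminus>k\<close>, so they are adjacent. For even \<open>k\<close>
  the vectors \<open>(a, b)\<close> and \<open>v\<close> agree mod 2, so \<open>(a, b) \<plusminus> v\<close> is not primitive.\<close>

lemma coprime_cross_eq_imp_translate:
  fixes p q a b a' b' :: int
  assumes "coprime p q" and "a * q - b * p = a' * q - b' * p"
  shows "\<exists>t. a' = a + t * p \<and> b' = b + t * q"
proof -
  obtain x y where bezout: "x * p + y * q = 1"
    using bezout_int[of p q] assms(1) by (auto simp: coprime_iff_gcd_eq_1)
  have cross: "p * (b' - b) = q * (a' - a)"
    using assms(2) by (simp add: algebra_simps)
  define t where "t = x * (a' - a) + y * (b' - b)"
  have "a' = a + t * p" and "b' = b + t * q"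
    using bezout cross unfolding t_def by algebra+
  then show ?thesis
    by blast
qed

lemma double_eq_if_far_translate_within_bound:
  fixes a p t :: int
  assumes "\<bar>a\<bar> \<le> \<bar>p\<bar>" and "\<bar>a + t * p\<bar> \<le> \<bar>p\<bar>" and "2 \<le> \<bar>t\<bar>"
  shows "2 * a = - (t * p)"
proof -
  have "\<bar>t\<bar> * \<bar>p\<bar> \<le> 2 * \<bar>p\<bar>"
    using assms(1,2) abs_triangle_ineq4[of "a + t * p" a] by (simp add: abs_mult)
  then have "p = 0 \<or> t = 2 \<or> t = -2"
    using assms(3) by (cases "p = 0") auto
  then show ?thesis
    using assms(1,2) by (elim disjE; cases "p \<ge> 0") (simp_all add: abs_le_iff)
qed

definition oriented_pred :: "nat \<Rightarrow> int \<times> int \<Rightarrow> int \<times> int \<Rightarrow> bool" where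
  "oriented_pred k r v \<longleftrightarrow> is_vertex r \<and> fst r * snd v - snd r * fst v = int k
     \<and> \<bar>fst r\<bar> \<le> \<bar>fst v\<bar> \<and> \<bar>snd r\<bar> \<le> \<bar>snd v\<bar>"

lemma predF_imp_oriented_pred:
  assumes "predF k w v"
  obtains r where "same_vertex w r" and "oriented_pred k r v"
proof -
  obtain a b where w: "w = (a, b)" by force
  have "\<bar>a * snd v - b * fst v\<bar> = int k"
    using assms by (simp add: predF_def adjF_def fdist_def w)
  then consider "a * snd v - b * fst v = int k" | "(- a) * snd v - (- b) * fst v = int k"
    by linarith
  then show ?thesis
    using assms that[of "(a, b)"] that[of "(- a, - b)"]
    by cases (auto simp: same_vertex_def oriented_pred_def predF_def adjF_def is_vertex_def w)
qed

lemma oriented_preds_differ_by_unit: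
  assumes "is_vertex (p, q)" and "k > 0"
    and "oriented_pred k (a, b) (p, q)" and "oriented_pred k (a', b') (p, q)"
    and "(a, b) \<noteq> (a', b')"
  obtains t where "\<bar>t\<bar> = 1" and "a' = a + t * p" and "b' = b + t * q"
proof -
  have cross: "a * q - b * p = int k" "a' * q - b' * p = int k"
    and bounds: "\<bar>a\<bar> \<le> \<bar>p\<bar>" "\<bar>a'\<bar> \<le> \<bar>p\<bar>" "\<bar>b\<bar> \<le> \<bar>q\<bar>" "\<bar>b'\<bar> \<le> \<bar>q\<bar>"
    using assms(3,4) by (simp_all add: oriented_pred_def)
  obtain t where t: "a' = a + t * p" "b' = b + t * q"
    using coprime_cross_eq_imp_translate[of p q a b a' b'] assms(1) cross
    by (auto simp: is_vertex_def)
  have "t \<noteq> 0"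
    using t assms(5) by auto
  moreover have "\<not> 2 \<le> \<bar>t\<bar>"
  proof
    assume "2 \<le> \<bar>t\<bar>"
    then have "2 * a = - (t * p)" and "2 * b = - (t * q)"
      using double_eq_if_far_translate_within_bound bounds t by metis+
    then have "2 * (a * q - b * p) = 0"
      by algebra
    then show False
      using cross assms(2) by simp
  qed
  ultimately have "\<bar>t\<bar> = 1"
    by arith
  then show ?thesis
    using that t by blast
qed

lemma same_vertex_common_rep:
  assumes "same_vertex w r" and "same_vertex w' r"
  shows "same_vertex w w'"
  using assms by (cases w; cases w'; cases r) (auto simp: same_vertex_def)

lemma two_predF_differ_by_unit:
  assumes "is_vertex (p, q)" and "k > 0"
    and "predF k w1 (p, q)" and "predF k w2 (p, q)" and "\<not> same_vertex w1 w2"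
  obtains a b t where "\<bar>t\<bar> = 1"
    and "same_vertex w1 (a, b)" and "same_vertex w2 (a + t * p, b + t * q)"
    and "oriented_pred k (a, b) (p, q)" and "oriented_pred k (a + t * p, b + t * q) (p, q)"
proof -
  obtain a b where r1: "same_vertex w1 (a, b)" "oriented_pred k (a, b) (p, q)"
    using predF_imp_oriented_pred[OF assms(3)] by (metis prod.collapse)
  obtain a' b' where r2: "same_vertex w2 (a', b')" "oriented_pred k (a', b') (p, q)"
    using predF_imp_oriented_pred[OF assms(4)] by (metis prod.collapse)
  have "(a, b) \<noteq> (a', b')"
    using r1(1) r2(1) assms(5) same_vertex_common_rep by blast
  then obtain t where "\<bar>t\<bar> = 1" "a' = a + t * p" "b' = b + t * q"
    using oriented_preds_differ_by_unit[OF assms(1,2) r1(2) r2(2)] by blast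
  then show ?thesis
    using that r1 r2 by blast
qed

lemma coprime_imp_not_both_even:
  fixes a b :: int
  assumes "coprime a b"
  shows "odd a \<or> odd b"
  using assms by (metis coprime_common_divisor dvd_refl odd_one)

lemma odd_cross_if_translate_coprime:
  fixes p q a b t :: int
  assumes "coprime p q" and "coprime a b" and "coprime (a + t * p) (b + t * q)" and "odd t"
  shows "odd (a * q - b * p)"
  using coprime_imp_not_both_even[OF assms(1)] coprime_imp_not_both_even[OF assms(2)]
    coprime_imp_not_both_even[OF assms(3)] assms(4)
  by auto

lemma fdist_same_vertex:
  assumes "same_vertex w r" and "same_vertex w' r'"
  shows "fdist w w' = fdist r r'"
  using assms
  by (cases w; cases r; cases w'; cases r')
    (auto simp: same_vertex_def fdist_def algebra_simps abs_minus_commute)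

lemma predF_unique_if_even:
  assumes "even k" and "k > 0" and "is_vertex v" and "predF k w1 v" and "predF k w2 v"
  shows "same_vertex w1 w2"
proof (rule ccontr)
  obtain p q where v: "v = (p, q)" by force
  assume "\<not> same_vertex w1 w2"
  then obtain a b t where "\<bar>t\<bar> = 1"
    and "oriented_pred k (a, b) (p, q)" and "oriented_pred k (a + t * p, b + t * q) (p, q)"
    using two_predF_differ_by_unit assms(2-5) unfolding v by metis
  then have "odd (int k)"
    using odd_cross_if_translate_coprime[of p q a b t] assms(3)
    by (auto simp: oriented_pred_def is_vertex_def v abs_if split: if_splits)
  then show False
    using assms(1) by simp
qed

lemma predF_adjacent:
  assumes "k > 0" and "is_vertex v" and "predF k w1 v" and "predF k w2 v"
    and "\<not> same_vertex w1 w2"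
  shows "adjF k w1 w2"
proof -
  obtain p q where v: "v = (p, q)" by force
  obtain a b t where t: "\<bar>t\<bar> = 1"
    and "same_vertex w1 (a, b)" and "same_vertex w2 (a + t * p, b + t * q)"
    and "oriented_pred k (a, b) (p, q)"
    using two_predF_differ_by_unit assms unfolding v by metis
  then have cross: "a * q - b * p = int k"
    by (simp add: oriented_pred_def)
  have "fdist w1 w2 = fdist (a, b) (a + t * p, b + t * q)"
    using fdist_same_vertex \<open>same_vertex w1 (a, b)\<close> \<open>same_vertex w2 (a + t * p, b + t * q)\<close>
    by blast
  also have "\<dots> = \<bar>t\<bar> * \<bar>a * q - b * p\<bar>"
    by (simp add: fdist_def algebra_simps flip: abs_mult)
  also have "\<dots> = int k"
    using t cross by simp
  finally show ?thesis
    using assms(3,4) by (simp add: adjF_def predF_def)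
qed

lemma predF_at_most_two:
  assumes "k > 0" and "is_vertex v"
    and "predF k w1 v" and "predF k w2 v" and "predF k w3 v"
  shows "same_vertex w1 w2 \<or> same_vertex w1 w3 \<or> same_vertex w2 w3"
proof (rule ccontr)
  assume distinct: "\<not> ?thesis"
  obtain p q where v: "v = (p, q)" by force
  obtain a1 b1 a2 b2 a3 b3 where
    r: "same_vertex w1 (a1, b1)" "same_vertex w2 (a2, b2)" "same_vertex w3 (a3, b3)"
    and o: "oriented_pred k (a1, b1) (p, q)" "oriented_pred k (a2, b2) (p, q)"
      "oriented_pred k (a3, b3) (p, q)"
    using predF_imp_oriented_pred assms(3-5) unfolding v by (metis prod.collapse)
  have "(a1, b1) \<noteq> (a2, b2)" "(a1, b1) \<noteq> (a3, b3)" "(a2, b2) \<noteq> (a3, b3)"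
    using r distinct same_vertex_common_rep by blast+
  note differ = oriented_preds_differ_by_unit[OF assms(2)[unfolded v] assms(1)]
  obtain t where t: "\<bar>t\<bar> = 1" "a2 = a1 + t * p" "b2 = b1 + t * q"
    using differ[OF o(1,2) \<open>(a1, b1) \<noteq> (a2, b2)\<close>] .
  obtain s where s: "\<bar>s\<bar> = 1" "a3 = a1 + s * p" "b3 = b1 + s * q"
    using differ[OF o(1,3) \<open>(a1, b1) \<noteq> (a3, b3)\<close>] .
  obtain u where u: "\<bar>u\<bar> = 1" "a3 = a2 + u * p" "b3 = b2 + u * q"
    using differ[OF o(2,3) \<open>(a2, b2) \<noteq> (a3, b3)\<close>] .
  have "p * (s - (t + u)) = 0" and "q * (s - (t + u)) = 0"
    using t s u by (simp_all add: algebra_simps)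
  moreover have "(p, q) \<noteq> (0, 0)"
    using assms(2) v by (auto simp: is_vertex_def)
  ultimately have "s = t + u"
    by auto
  then show False
    using t(1) s(1) u(1) by arith
qed

theorem lemma4p6:
  fixes k :: nat
  assumes "k > 0"
  shows "(even k \<longrightarrow>
           (\<forall>v w1 w2. is_vertex v \<and> predF k w1 v \<and> predF k w2 v
              \<longrightarrow> same_vertex w1 w2))
       \<and> (odd k \<longrightarrow>
           (\<forall>v w1 w2 w3. is_vertex v \<and> predF k w1 v \<and> predF k w2 v \<and> predF k w3 v
              \<longrightarrow> same_vertex w1 w2 \<or> same_vertex w1 w3 \<or> same_vertex w2 w3)
         \<and> (\<forall>v w1 w2. is_vertex v \<and> predF k w1 v \<and> predF k w2 v
              \<and> \<not> same_vertex w1 w2 \<longrightarrow> adjF k w1 w2))"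
proof (intro conjI impI allI; elim conjE)
  show "same_vertex w1 w2" if "even k" "is_vertex v" "predF k w1 v" "predF k w2 v" for v w1 w2
    using predF_unique_if_even assms that by blast
  show "same_vertex w1 w2 \<or> same_vertex w1 w3 \<or> same_vertex w2 w3"
    if "is_vertex v" "predF k w1 v" "predF k w2 v" "predF k w3 v" for v w1 w2 w3
    using predF_at_most_two assms that by blast
  show "adjF k w1 w2"
    if "is_vertex v" "predF k w1 v" "predF k w2 v" "\<not> same_vertex w1 w2" for v w1 w2
    using predF_adjacent assms that by blast
qed

end
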